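(* Let $L=2$, assume $\min\{d_1\}\ge d_{\min}$ (i.e., $d_1\ge\min\{d_0,d_2\}$), and suppose $\lambda=y_i^2$ for some $i\in[r_Y]$. Then for every $\bm\sigma^*\in\mathcal A$, there do not exist constants $\epsilon,\kappa>0$ such that $\mathrm{dist}(\bm W,\widehat{\mathcal W}_{\bm\sigma^*})\le\kappa\|\nabla G(\bm W)\|_F$ holds for all $\bm W$ with $\mathrm{dist}(\bm W,\widehat{\mathcal W}_{\bm\sigma^*})\le\epsilon$.
   Context: Setting: $d_0,d_1,d_2$ positive integers, $d_{\min}=\min\{d_0,d_2\}$, $\lambda>0$, $\bm Y\in\mathbb R^{d_2\times d_0}$ diagonal with entries $y_1\ge\dots\ge y_{d_{\min}}\ge0$, $r_Y$ the number of positive $y_i$, $G(\bm W_1,\bm W_2)=\|\bm W_2\bm W_1-\sqrt\lambda\bm Y\|_F^2+\lambda(\|\bm W_1\|_F^2+\|\bm W_2\|_F^2)$. $\mathcal A=\{\bm a\in\mathbb R^{d_{\min}}:a_i^3-\sqrt\lambda y_ia_i+\lambda a_i=0,a_i\ge0\ \forall i\}$. For $\bm\sigma^*\in\mathcal A$, $\widehat{\mathcal W}_{\bm\sigma^*}:=\mathcal W_{\mathrm{sort}(\bm\sigma^* )}$, where $\mathrm{sort}$ rearranges entries in nonincreasing order and, for $\bm\sigma$ nonincreasing with $\bm\sigma=\bm\Pi\bm a$, $\bm a\in\mathcal A$, $\bm\Pi$ a permutation matrix, $\mathcal W_{\bm\sigma}$ is the set of pairs $\bm W_1=\bm Q_2\bm\Sigma_1\mathrm{BlkD}(\bm\Pi,\bm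 I)\mathrm{BlkD}(\bm O_1,\dots,\bm O_{p_Y+1})$, $\bm W_2=\mathrm{BlkD}(\bm O_1^T,\dots,\bm O_{p_Y}^T,\widehat{\bm O}_{p_Y+1}^T)\mathrm{BlkD}(\bm\Pi^T,\bm I)\bm\Sigma_2\bm Q_2^T$, with $\bm\Sigma_l\in\mathbb R^{d_l\times d_{l-1}}$ having top-left block $\mathrm{diag}(\bm\sigma)$ and zeros elsewhere, and $\bm Q_2\in\mathcal O^{d_1}$, $\bm O_k\in\mathcal O^{h_k}$ ($h_k$ the multiplicities of the $p_Y$ distinct positive $y$-values), $\bm O_{p_Y+1}\in\mathcal O^{d_0-r_Y}$, $\widehat{\bm O}_{p_Y+1}\in\mathcal O^{d_2-r_Y}$ arbitrary orthogonal matrices. Distances/gradient norms are Frobenius norms on tuples. *)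

theory Defs
  imports "HOL-Analysis.Analysis"
begin

text \<open>Matrices are typed: an m x n real matrix with row index type 'm and column index type 'n
  is real^'n^'m.  Index types 'a, 'b, 'c have cardinalities d0, d1, d2.  Fixed bijections
  e :: index \<Rightarrow> nat onto {..<card} identify positions (0-based).  The HOL-Analysis norm on
  real^'n^'m is the Frobenius norm, and the product norm on pairs is the Frobenius norm on tuples.\<close>

definition rankY :: "nat \<Rightarrow> (nat \<Rightarrow> real) \<Rightarrow> nat" where
  "rankY n y = card {i. i < n \<and> 0 < y i}"

definition Aset :: "nat \<Rightarrow> real \<Rightarrow> (nat \<Rightarrow> real) \<Rightarrow> real list set" where
  "Aset n lam y = {a. length a = n \<and>
     (\<forall>i<n. (a!i)^3 - sqrt lam * y i * (a!i) + lam * (a!i) = 0 \<and> 0 \<le> a!i)}"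

definition Ymat :: "('a::finite \<Rightarrow> nat) \<Rightarrow> ('c::finite \<Rightarrow> nat) \<Rightarrow> (nat \<Rightarrow> real) \<Rightarrow> real^'a^'c" where
  "Ymat e0 e2 y = (\<chi> c a. if e2 c = e0 a \<and> e0 a < min CARD('a) CARD('c) then y (e0 a) else 0)"

definition lossG :: "real \<Rightarrow> real^'a::finite^'c::finite \<Rightarrow> ((real^'a^'b::finite) \<times> (real^'b^'c)) \<Rightarrow> real" where
  "lossG lam Y W = (norm (snd W ** fst W - sqrt lam *\<^sub>R Y))^2
                   + lam * ((norm (fst W))^2 + (norm (snd W))^2)"

definition grad :: "('v::real_inner \<Rightarrow> real) \<Rightarrow> 'v \<Rightarrow> 'v" where
  "grad f x = (THE g. (f has_derivative (\<lambda>h. g \<bullet> h)) (at x))"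

definition Sig1 :: "('a::finite \<Rightarrow> nat) \<Rightarrow> ('b::finite \<Rightarrow> nat) \<Rightarrow> real list \<Rightarrow> real^'a^'b" where
  "Sig1 e0 e1 s = (\<chi> b a. if e1 b = e0 a \<and> e0 a < length s then s!(e0 a) else 0)"

definition Sig2 :: "('b::finite \<Rightarrow> nat) \<Rightarrow> ('c::finite \<Rightarrow> nat) \<Rightarrow> real list \<Rightarrow> real^'b^'c" where
  "Sig2 e1 e2 s = (\<chi> c b. if e2 c = e1 b \<and> e1 b < length s then s!(e1 b) else 0)"

definition PiBlk :: "('i::finite \<Rightarrow> nat) \<Rightarrow> nat \<Rightarrow> (nat \<Rightarrow> nat) \<Rightarrow> real^'i^'i" where
  "PiBlk e n p = (\<chi> i j. if e i < n \<and> e j < n then (if e i = p (e j) then 1 else 0)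
                        else (if i = j then 1 else 0))"

text \<open>Group key: positions k < r_Y are grouped by equal value y k (the blocks of the
  multiplicities h_k); all positions >= r_Y form the last group.\<close>
definition gkey :: "(nat \<Rightarrow> real) \<Rightarrow> nat \<Rightarrow> nat \<Rightarrow> real" where
  "gkey y r k = (if k < r then y k else 0)"

text \<open>BlkD(O_1,...,O_{p_Y},O_{p_Y+1}) with arbitrary orthogonal blocks = orthogonal matrices
  vanishing outside the diagonal blocks.\<close>
definition blk_ok :: "('i::finite \<Rightarrow> nat) \<Rightarrow> (nat \<Rightarrow> real) \<Rightarrow> nat \<Rightarrow> real^'i^'i \<Rightarrow> bool" where
  "blk_ok e y r U \<longleftrightarrow> orthogonal_matrix U \<and>
     (\<forall>i j. gkey y r (e i) \<noteq> gkey y r (e j) \<longrightarrow> U$i$j = 0)"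

definition Wset :: "('a::finite \<Rightarrow> nat) \<Rightarrow> ('b::finite \<Rightarrow> nat) \<Rightarrow> ('c::finite \<Rightarrow> nat)
    \<Rightarrow> real \<Rightarrow> (nat \<Rightarrow> real) \<Rightarrow> real list \<Rightarrow> ((real^'a^'b) \<times> (real^'b^'c)) set" where
  "Wset e0 e1 e2 lam y s =
    (let n = min CARD('a) CARD('c); r = rankY n y in
     {(W1, W2). \<exists>a p Q U V.
        a \<in> Aset n lam y \<and> p permutes {..<n} \<and> (\<forall>j<n. s!(p j) = a!j) \<and>
        orthogonal_matrix Q \<and> blk_ok e0 y r U \<and> blk_ok e2 y r V \<and>
        (\<forall>i j i' j'. e2 i = e0 i' \<longrightarrow> e2 j = e0 j' \<longrightarrow> e0 i' < r \<longrightarrow> e0 j' < r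
            \<longrightarrow> V$i$j = U$j'$i') \<and>
        W1 = Q ** Sig1 e0 e1 s ** PiBlk e0 n p ** U \<and>
        W2 = V ** transpose (PiBlk e2 n p) ** Sig2 e1 e2 s ** transpose Q})"

definition hatW :: "('a::finite \<Rightarrow> nat) \<Rightarrow> ('b::finite \<Rightarrow> nat) \<Rightarrow> ('c::finite \<Rightarrow> nat)
    \<Rightarrow> real \<Rightarrow> (nat \<Rightarrow> real) \<Rightarrow> real list \<Rightarrow> ((real^'a^'b) \<times> (real^'b^'c)) set" where
  "hatW e0 e1 e2 lam y s = Wset e0 e1 e2 lam y (rev (sort s))"

end

theory Submission
  imports Defs
begin

text \<open>At a point of \<open>hatW\<close> built from \<open>s \<in> A\<close>, the entry \<open>s!i\<close> with \<open>y i = \<surd>\<lambda>\<close> vanishes, and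
  along this diagonal direction the loss restricts to \<open>t\<^sup>4 + const\<close>. Moving it to \<open>t\<close> therefore
  gives a critical-point residual of order \<open>t\<^sup>3\<close>, while the distance to \<open>hatW\<close> is of order \<open>t\<close>:
  the first factor of every point of \<open>hatW\<close> has rank at most the number of nonzero entries of
  \<open>s\<close>, whereas the moved point has one more diagonal entry of size at least \<open>t\<close>. A linear
  error bound \<open>t \<le> \<kappa> t\<^sup>3\<close> is then impossible for small \<open>t\<close>.\<close>

lemma grad_eqI:
  fixes f :: "'v::real_inner \<Rightarrow> real"
  assumes "(f has_derivative (\<lambda>h. g \<bullet> h)) (at x)"
  shows "grad f x = g"
  unfolding grad_def
proof (rule the_equality)
  show "(f has_derivative (\<lambda>h. g \<bullet> h)) (at x)" by fact
next
  fix g' assume "(f has_derivative (\<lambda>h. g' \<bullet> h)) (at x)"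
  from has_derivative_unique[OF this assms] have "(\<lambda>h. g' \<bullet> h) = (\<lambda>h. g \<bullet> h)" .
  then have "g' \<bullet> (g' - g) = g \<bullet> (g' - g)" by metis
  then have "(g' - g) \<bullet> (g' - g) = 0" by (simp add: inner_diff_left)
  then show "g' = g" by simp
qed

lemma bounded_bilinear_matrix_matrix_mult:
  "bounded_bilinear (\<lambda>(A::real^'n::finite^'m::finite) (B::real^'k::finite^'n). A ** B)"
proof -
  have "bilinear (\<lambda>(A::real^'n^'m) (B::real^'k^'n). A ** B)"
    unfolding bilinear_def linear_iff
    by (auto simp: matrix_add_ldistrib; vector matrix_matrix_mult_def sum.distrib sum_distrib_left field_simps)
  then show ?thesis by (simp add: bilinear_conv_bounded_bilinear)
qed

lemma inner_matrix_mult_left: "(R::real^'k^'m) \<bullet> ((A::real^'n^'m) ** B) = (transpose A ** R) \<bullet> B"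
proof -
  have "R \<bullet> (A ** B) = (\<Sum>i\<in>UNIV. \<Sum>j\<in>UNIV. \<Sum>k\<in>UNIV. R$i$j * A$i$k * B$k$j)"
    unfolding inner_vec_def matrix_matrix_mult_def
    by (simp add: inner_real_def sum_distrib_left mult.assoc)
  also have "\<dots> = (\<Sum>i\<in>UNIV. \<Sum>k\<in>UNIV. \<Sum>j\<in>UNIV. R$i$j * A$i$k * B$k$j)"
    by (rule sum.cong[OF refl], rule sum.swap)
  also have "\<dots> = (\<Sum>k\<in>UNIV. \<Sum>i\<in>UNIV. \<Sum>j\<in>UNIV. R$i$j * A$i$k * B$k$j)"
    by (rule sum.swap)
  also have "\<dots> = (\<Sum>k\<in>UNIV. \<Sum>j\<in>UNIV. \<Sum>i\<in>UNIV. R$i$j * A$i$k * B$k$j)"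
    by (rule sum.cong[OF refl], rule sum.swap)
  also have "\<dots> = (transpose A ** R) \<bullet> B"
    unfolding inner_vec_def matrix_matrix_mult_def transpose_def
    by (simp add: inner_real_def sum_distrib_left sum_distrib_right mult_ac)
  finally show ?thesis .
qed

lemma inner_matrix_mult_right: "(R::real^'k^'m) \<bullet> ((A::real^'n^'m) ** B) = (R ** transpose B) \<bullet> A"
proof -
  have "R \<bullet> (A ** B) = (\<Sum>i\<in>UNIV. \<Sum>j\<in>UNIV. \<Sum>k\<in>UNIV. R$i$j * A$i$k * B$k$j)"
    unfolding inner_vec_def matrix_matrix_mult_def
    by (simp add: inner_real_def sum_distrib_left mult.assoc)
  also have "\<dots> = (\<Sum>i\<in>UNIV. \<Sum>k\<in>UNIV. \<Sum>j\<in>UNIV. R$i$j * A$i$k * B$k$j)"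
    by (rule sum.cong[OF refl], rule sum.swap)
  also have "\<dots> = (R ** transpose B) \<bullet> A"
    unfolding inner_vec_def matrix_matrix_mult_def transpose_def
    by (simp add: inner_real_def sum_distrib_left sum_distrib_right mult_ac)
  finally show ?thesis .
qed

lemma has_derivative_lossG:
  fixes lam :: real and Y :: "real^'a::finite^'c::finite" and W :: "(real^'a^'b::finite) \<times> (real^'b^'c)"
  defines "R \<equiv> snd W ** fst W - sqrt lam *\<^sub>R Y"
  shows "(lossG lam Y has_derivative (\<lambda>h. (2 *\<^sub>R (transpose (snd W) ** R) + (2*lam) *\<^sub>R fst W,
            2 *\<^sub>R (R ** transpose (fst W)) + (2*lam) *\<^sub>R snd W) \<bullet> h)) (at W)"
proof -
  have fst: "((\<lambda>W::(real^'a^'b) \<times> (real^'b^'c). fst W) has_derivative fst) (at W)"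
    and snd: "((\<lambda>W::(real^'a^'b) \<times> (real^'b^'c). snd W) has_derivative snd) (at W)"
    using has_derivative_fst[OF has_derivative_ident] has_derivative_snd[OF has_derivative_ident]
    by blast+
  have residual: "((\<lambda>W::(real^'a^'b) \<times> (real^'b^'c). snd W ** fst W - sqrt lam *\<^sub>R Y) has_derivative
        (\<lambda>h. snd W ** fst h + snd h ** fst W)) (at W)"
    using has_derivative_diff[OF bounded_bilinear.FDERIV[OF bounded_bilinear_matrix_matrix_mult snd fst]
        has_derivative_const]
    by simp
  have loss: "lossG lam Y = (\<lambda>W. (snd W ** fst W - sqrt lam *\<^sub>R Y) \<bullet> (snd W ** fst W - sqrt lam *\<^sub>R Y)
      + lam * (fst W \<bullet> fst W + snd W \<bullet> snd W))"
    by (auto simp: lossG_def power2_norm_eq_inner)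
  have deriv: "(lossG lam Y has_derivative (\<lambda>h. (R \<bullet> (snd W ** fst h + snd h ** fst W)
      + (snd W ** fst h + snd h ** fst W) \<bullet> R)
      + lam * ((fst W \<bullet> fst h + fst h \<bullet> fst W) + (snd W \<bullet> snd h + snd h \<bullet> snd W)))) (at W)"
    unfolding loss R_def
    by (intro has_derivative_add has_derivative_inner residual fst snd has_derivative_mult_right)
  show ?thesis
  proof (rule has_derivative_eq_rhs[OF deriv ext])
    fix h :: "(real^'a^'b) \<times> (real^'b^'c)"
    have "R \<bullet> (snd W ** fst h + snd h ** fst W)
        = (transpose (snd W) ** R) \<bullet> fst h + (R ** transpose (fst W)) \<bullet> snd h"
      by (simp only: inner_add_right inner_matrix_mult_left[of R "snd W"] inner_matrix_mult_right[of R "snd h"])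
    moreover have "(snd W ** fst h + snd h ** fst W) \<bullet> R = R \<bullet> (snd W ** fst h + snd h ** fst W)"
      "fst h \<bullet> fst W = fst W \<bullet> fst h" "snd h \<bullet> snd W = snd W \<bullet> snd h"
      by (simp_all only: inner_commute)
    ultimately show "(R \<bullet> (snd W ** fst h + snd h ** fst W) + (snd W ** fst h + snd h ** fst W) \<bullet> R)
      + lam * ((fst W \<bullet> fst h + fst h \<bullet> fst W) + (snd W \<bullet> snd h + snd h \<bullet> snd W)) =
      (2 *\<^sub>R (transpose (snd W) ** R) + (2*lam) *\<^sub>R fst W,
            2 *\<^sub>R (R ** transpose (fst W)) + (2*lam) *\<^sub>R snd W) \<bullet> h"
      by (cases h) (simp add: inner_Pair inner_add_left algebra_simps)
  qed
qed

definition diagm :: "('i::finite \<Rightarrow> nat) \<Rightarrow> ('j::finite \<Rightarrow> nat) \<Rightarrow> (nat \<Rightarrow> real) \<Rightarrow> nat \<Rightarrow> real^'j^'i" where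
  "diagm ei ej f n = (\<chi> i j. if ei i = ej j \<and> ej j < n then f (ej j) else 0)"

definition diag_pair :: "('a::finite \<Rightarrow> nat) \<Rightarrow> ('b::finite \<Rightarrow> nat) \<Rightarrow> ('c::finite \<Rightarrow> nat)
    \<Rightarrow> (nat \<Rightarrow> real) \<Rightarrow> nat \<Rightarrow> (real^'a^'b) \<times> (real^'b^'c)" where
  "diag_pair e0 e1 e2 f n = (diagm e1 e0 f n, diagm e2 e1 f n)"

lemma Ymat_eq_diagm:
  fixes e0 :: "'a::finite \<Rightarrow> nat" and e2 :: "'c::finite \<Rightarrow> nat"
  shows "Ymat e0 e2 y = diagm e2 e0 y (min CARD('a) CARD('c))"
  unfolding Ymat_def diagm_def by simp

lemma transpose_diagm: "transpose (diagm ei ej f n) = diagm ej ei f n"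
  unfolding diagm_def transpose_def by (auto simp: vec_eq_iff)

lemma diagm_add: "diagm ei ej f n + diagm ei ej g n = diagm ei ej (\<lambda>k. f k + g k) n"
  unfolding diagm_def by (auto simp: vec_eq_iff)

lemma diagm_diff: "diagm ei ej f n - diagm ei ej g n = diagm ei ej (\<lambda>k. f k - g k) n"
  unfolding diagm_def by (auto simp: vec_eq_iff)

lemma scaleR_diagm: "c *\<^sub>R diagm ei ej f n = diagm ei ej (\<lambda>k. c * f k) n"
  unfolding diagm_def by (auto simp: vec_eq_iff)

lemma diagm_cong: "(\<And>k. k < n \<Longrightarrow> f k = g k) \<Longrightarrow> diagm ei ej f n = diagm ei ej g n"
  unfolding diagm_def by (auto simp: vec_eq_iff)

lemma diag_pair_add:
  "diag_pair e0 e1 e2 f n + diag_pair e0 e1 e2 g n = diag_pair e0 e1 e2 (\<lambda>k. f k + g k) n"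
  by (simp add: diag_pair_def diagm_add)

lemma scaleR_diag_pair: "c *\<^sub>R diag_pair e0 e1 e2 f n = diag_pair e0 e1 e2 (\<lambda>k. c * f k) n"
  by (simp add: diag_pair_def scaleR_diagm)

lemma diag_pair_cong:
  "(\<And>k. k < n \<Longrightarrow> f k = g k) \<Longrightarrow> diag_pair e0 e1 e2 f n = diag_pair e0 e1 e2 g n"
  unfolding diag_pair_def by (auto intro!: diagm_cong)

lemma diagm_mult:
  fixes ei :: "'i::finite \<Rightarrow> nat" and ek :: "'k::finite \<Rightarrow> nat" and ej :: "'j::finite \<Rightarrow> nat"
  assumes ek: "bij_betw ek UNIV {..<CARD('k)}" and n: "n \<le> CARD('k)"
  shows "diagm ei ek f n ** diagm ek ej g n = diagm ei ej (\<lambda>k. f k * g k) n"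
proof -
  have "(\<Sum>k\<in>UNIV. (if ei i = ek k \<and> ek k < n then f (ek k) else 0) *
            (if ek k = ej j \<and> ej j < n then g (ej j) else 0)) =
        (if ei i = ej j \<and> ej j < n then f (ej j) * g (ej j) else 0)" for i j
  proof (cases "ei i = ej j \<and> ej j < n")
    case True
    then have "ej j \<in> {..<CARD('k)}" using n by auto
    then obtain k0 where k0: "ek k0 = ej j" using ek unfolding bij_betw_def by (metis imageE)
    have "inj ek" using ek bij_betw_def by blast
    then have "(if ei i = ek k \<and> ek k < n then f (ek k) else 0) *
            (if ek k = ej j \<and> ej j < n then g (ej j) else 0) = (if k = k0 then f (ej j) * g (ej j) else 0)" for k
      using True k0[symmetric] by (auto simp: inj_eq)
    then show ?thesis using True by simp
  qed (auto intro!: sum.neutral)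
  then show ?thesis unfolding diagm_def matrix_matrix_mult_def by (simp add: vec_eq_iff)
qed

lemma grad_lossG_diag_pair:
  fixes e0 :: "'a::finite \<Rightarrow> nat" and e1 :: "'b::finite \<Rightarrow> nat" and e2 :: "'c::finite \<Rightarrow> nat"
  assumes e0: "bij_betw e0 UNIV {..<CARD('a)}"
    and e1: "bij_betw e1 UNIV {..<CARD('b)}"
    and e2: "bij_betw e2 UNIV {..<CARD('c)}"
    and n: "n = min CARD('a) CARD('c)" and nb: "n \<le> CARD('b)"
  shows "grad (lossG lam (Ymat e0 e2 y)) (diag_pair e0 e1 e2 x n) =
    diag_pair e0 e1 e2 (\<lambda>k. 2 * ((x k)^3 - sqrt lam * y k * x k + lam * x k)) n"
proof -
  have na: "n \<le> CARD('a)" and nc: "n \<le> CARD('c)" using n by auto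
  let ?W = "diag_pair e0 e1 e2 x n"
  let ?R = "snd ?W ** fst ?W - sqrt lam *\<^sub>R Ymat e0 e2 y"
  have R: "?R = diagm e2 e0 (\<lambda>k. x k * x k - sqrt lam * y k) n"
    by (simp add: diag_pair_def diagm_mult[OF e1 nb] Ymat_eq_diagm n[symmetric] scaleR_diagm diagm_diff)
  have "transpose (snd ?W) ** ?R = diagm e1 e0 (\<lambda>k. x k * (x k * x k - sqrt lam * y k)) n"
    and "?R ** transpose (fst ?W) = diagm e2 e1 (\<lambda>k. (x k * x k - sqrt lam * y k) * x k) n"
    unfolding R by (simp_all add: diag_pair_def transpose_diagm diagm_mult[OF e2 nc] diagm_mult[OF e0 na])
  then show ?thesis
    using has_derivative_lossG[of lam "Ymat e0 e2 y" ?W]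
    by (intro grad_eqI) (simp add: diag_pair_def scaleR_diagm diagm_add power3_eq_cube algebra_simps)
qed

definition perm_index :: "('i::finite \<Rightarrow> nat) \<Rightarrow> nat \<Rightarrow> (nat \<Rightarrow> nat) \<Rightarrow> 'i \<Rightarrow> 'i" where
  "perm_index e n p i = (if e i < n then inv e (p (e i)) else i)"

context
  fixes e :: "'i::finite \<Rightarrow> nat" and n :: nat and p :: "nat \<Rightarrow> nat"
  assumes e: "bij_betw e UNIV {..<CARD('i)}" and n: "n \<le> CARD('i)" and p: "p permutes {..<n}"
begin

lemma e_perm_index: "e (perm_index e n p i) = (if e i < n then p (e i) else e i)"
proof (cases "e i < n")
  case True
  then have "p (e i) < n" using p permutes_in_image by fastforce
  then have "p (e i) \<in> range e" using e n unfolding bij_betw_def by auto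
  then show ?thesis using True unfolding perm_index_def by (simp add: f_inv_into_f)
qed (simp add: perm_index_def)

lemma PiBlk_nth: "PiBlk e n p $ k $ i = (if k = perm_index e n p i then 1 else 0)"
proof -
  have "inj e" using e bij_betw_def by blast
  then have k: "k = perm_index e n p i \<longleftrightarrow> e k = e (perm_index e n p i)" by (auto dest: injD)
  show ?thesis
  proof (cases "e i < n")
    case True
    then have "p (e i) < n" using p permutes_in_image by fastforce
    then show ?thesis using True k e_perm_index[of i] unfolding PiBlk_def by auto
  qed (simp add: PiBlk_def perm_index_def)
qed

lemma matrix_mult_PiBlk_nth: "(A ** PiBlk e n p) $ i $ j = A $ i $ (perm_index e n p j)"
proof -
  have "A$i$k * PiBlk e n p $ k $ j = (if k = perm_index e n p j then A$i$k else 0)" for k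
    by (simp add: PiBlk_nth)
  then show ?thesis unfolding matrix_matrix_mult_def by simp
qed

lemma transpose_PiBlk_mult_nth: "(transpose (PiBlk e n p) ** A) $ i $ j = A $ (perm_index e n p i) $ j"
proof -
  have "transpose (PiBlk e n p) $ i $ k * A $ k $ j = (if k = perm_index e n p i then A$k$j else 0)" for k
    by (simp add: PiBlk_nth transpose_def)
  then show ?thesis unfolding matrix_matrix_mult_def by simp
qed

lemma inj_perm_index: "inj (perm_index e n p)"
proof (rule injI)
  fix i j assume "perm_index e n p i = perm_index e n p j"
  then have "e (perm_index e n p i) = e (perm_index e n p j)" by simp
  moreover have p_less: "x < n \<Longrightarrow> p x < n" for x using permutes_in_image[OF p] by simp
  moreover have "p x = p y \<Longrightarrow> x = y" for x y using permutes_inj[OF p] by (auto dest: injD)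
  ultimately have "e i = e j" unfolding e_perm_index
    by (cases "e i < n"; cases "e j < n") (auto dest: p_less)
  then show "i = j" using e bij_betw_def by (auto dest: injD)
qed

lemma orthogonal_matrix_PiBlk: "orthogonal_matrix (PiBlk e n p)"
  unfolding orthogonal_matrix
  by (simp add: vec_eq_iff transpose_PiBlk_mult_nth PiBlk_nth mat_def inj_perm_index[THEN inj_eq])

end

lemma blk_ok_mat_1: "blk_ok e y r (mat 1)"
  unfolding blk_ok_def by (intro conjI orthogonal_matrix_id) (auto simp: mat_def)

text \<open>With \<open>\<sigma> = rev (sort s)\<close> and \<open>s = \<sigma> \<circ> p\<close>, the diagonal pair of \<open>s\<close> is \<open>(P\<^sub>1\<^sup>T \<Sigma>\<^sub>1 P\<^sub>0, P\<^sub>2\<^sup>T \<Sigma>\<^sub>2 P\<^sub>1)\<close>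
  for the block permutation matrices \<open>P\<^sub>l = PiBlk e\<^sub>l n p\<close>.\<close>
lemma diag_pair_in_hatW:
  fixes e0 :: "'a::finite \<Rightarrow> nat" and e1 :: "'b::finite \<Rightarrow> nat" and e2 :: "'c::finite \<Rightarrow> nat"
  assumes e0: "bij_betw e0 UNIV {..<CARD('a)}"
    and e1: "bij_betw e1 UNIV {..<CARD('b)}"
    and e2: "bij_betw e2 UNIV {..<CARD('c)}"
    and n: "n = min CARD('a) CARD('c)" and nb: "n \<le> CARD('b)"
    and s: "s \<in> Aset n lam y"
  shows "diag_pair e0 e1 e2 (nth s) n \<in> hatW e0 e1 e2 lam y s"
proof -
  have na: "n \<le> CARD('a)" and nc: "n \<le> CARD('c)" using n by auto
  have inj0: "inj e0" and inj1: "inj e1" and inj2: "inj e2" using e0 e1 e2 bij_betw_def by blast+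
  define \<sigma> where "\<sigma> = rev (sort s)"
  have len: "length \<sigma> = n" using s by (simp add: \<sigma>_def Aset_def)
  have "mset s = mset \<sigma>" by (simp add: \<sigma>_def)
  then obtain p where p': "p permutes {..<length \<sigma>}" and s_eq: "permute_list p \<sigma> = s"
    by (rule mset_eq_permutation)
  have p: "p permutes {..<n}" using p' len by simp
  have s_nth: "j < n \<Longrightarrow> s ! j = \<sigma> ! (p j)" for j
    using permute_list_nth[OF p', of j] s_eq len by simp
  have p_less: "j < n \<Longrightarrow> p j < n" "j < length \<sigma> \<Longrightarrow> p j < length \<sigma>" for j
    using permutes_in_image[OF p] len by simp_all
  have "inj p" using permutes_inj[OF p] .
  define P0 where "P0 = PiBlk e0 n p"
  define P1 where "P1 = PiBlk e1 n p"
  define P2 where "P2 = PiBlk e2 n p"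
  note perm0 = e_perm_index[OF e0 na p] and perm1 = e_perm_index[OF e1 nb p]
    and perm2 = e_perm_index[OF e2 nc p]
  have "(transpose P1 ** Sig1 e0 e1 \<sigma> ** P0) $ b $ a = diagm e1 e0 (nth s) n $ b $ a" for b a
    using perm0[of a] perm1[of b] len
    unfolding P0_def P1_def matrix_mult_PiBlk_nth[OF e0 na p] transpose_PiBlk_mult_nth[OF e1 nb p]
      Sig1_def diagm_def
    by (auto simp: s_nth p_less dest: injD[OF \<open>inj p\<close>] injD[OF inj0] injD[OF inj1])
  then have W1: "diagm e1 e0 (nth s) n = transpose P1 ** Sig1 e0 e1 \<sigma> ** P0 ** mat 1"
    by (simp add: vec_eq_iff)
  have "(transpose P2 ** Sig2 e1 e2 \<sigma> ** P1) $ c $ b = diagm e2 e1 (nth s) n $ c $ b" for c b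
    using perm2[of c] perm1[of b] len
    unfolding P2_def P1_def matrix_mult_PiBlk_nth[OF e1 nb p] transpose_PiBlk_mult_nth[OF e2 nc p]
      Sig2_def diagm_def
    by (auto simp: s_nth p_less dest: injD[OF \<open>inj p\<close>] injD[OF inj2] injD[OF inj1])
  then have W2: "diagm e2 e1 (nth s) n = mat 1 ** transpose P2 ** Sig2 e1 e2 \<sigma> ** transpose (transpose P1)"
    by (simp add: vec_eq_iff)
  have mat_1: "(mat 1 :: real^'c^'c) $ i $ j = (mat 1 :: real^'a^'a) $ j' $ i'"
    if "e2 i = e0 i'" "e2 j = e0 j'" for i j i' j'
    using that inj0 inj2 unfolding mat_def inj_def by auto
  show ?thesis
    unfolding hatW_def Wset_def Let_def n[symmetric] \<sigma>_def[symmetric] diag_pair_def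
      mem_Collect_eq case_prod_conv
    apply (rule exI[of _ s], rule exI[of _ p], rule exI[of _ "transpose P1"])
    apply (rule exI[of _ "mat 1"], rule exI[of _ "mat 1"])
    using s p s_nth W1 W2 orthogonal_matrix_PiBlk[OF e1 nb p] blk_ok_mat_1[of e0] blk_ok_mat_1[of e2] mat_1
    unfolding P1_def P0_def P2_def by (auto simp: orthogonal_matrix_transpose)
qed

lemma norm_vec_power2: "(norm (v::real^'n))\<^sup>2 = (\<Sum>i\<in>UNIV. (v$i)\<^sup>2)"
  unfolding power2_norm_eq_inner inner_vec_def by (simp add: power2_eq_square)

lemma norm_matrix_vector_mult_le: "norm ((A::real^'n^'m) *v x) \<le> norm A * norm x"
proof (rule power2_le_imp_le)
  have "(norm (A *v x))\<^sup>2 = (\<Sum>i\<in>UNIV. (A$i \<bullet> x)\<^sup>2)"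
    by (simp add: norm_vec_power2 matrix_mult_dot)
  also have "\<dots> \<le> (\<Sum>i\<in>UNIV. (norm (A$i))\<^sup>2 * (norm x)\<^sup>2)"
  proof (rule sum_mono)
    fix i
    have "\<bar>A$i \<bullet> x\<bar>\<^sup>2 \<le> (norm (A$i) * norm x)\<^sup>2"
      using Cauchy_Schwarz_ineq2 by (intro power_mono) auto
    then show "(A$i \<bullet> x)\<^sup>2 \<le> (norm (A$i))\<^sup>2 * (norm x)\<^sup>2" by (simp add: power_mult_distrib)
  qed
  also have "\<dots> = (norm A * norm x)\<^sup>2"
    by (simp add: power2_norm_eq_inner inner_vec_def sum_distrib_right power_mult_distrib)
  finally show "(norm (A *v x))\<^sup>2 \<le> (norm A * norm x)\<^sup>2" .
qed simp

lemma norm_matrix_vector_mult_sq: "(norm ((M::real^'n^'m) *v x))\<^sup>2 = x \<bullet> ((transpose M ** M) *v x)"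
proof -
  have "(norm (M *v x))\<^sup>2 = ((M *v x) v* M) \<bullet> x" by (simp add: power2_norm_eq_inner dot_lmul_matrix)
  also have "\<dots> = x \<bullet> (transpose M *v (M *v x))"
    by (metis inner_commute vector_transpose_matrix transpose_transpose)
  finally show ?thesis by (simp add: matrix_vector_mul_assoc)
qed

lemma exists_kernel_vector_supported:
  fixes A :: "real^'n^'m" and d :: "'n set"
  assumes "rank A < card d"
  obtains x where "x \<noteq> 0" "\<And>i. i \<notin> d \<Longrightarrow> x$i = 0" "A *v x = 0"
proof -
  define T where "T = {x::real^'n. \<forall>i. i \<notin> d \<longrightarrow> x$i = 0}"
  have T: "subspace T" unfolding T_def subspace_def by auto
  then have span_T: "span T = T" by (simp add: span_eq_iff)
  have "\<exists>x\<in>T. x \<noteq> 0 \<and> A *v x = 0"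
  proof (rule ccontr)
    assume "\<not> ?thesis"
    then have "inj_on ((*v) A) (span T)"
      using T by (intro linear_inj_on_iff_eq_0[THEN iffD2] matrix_vector_mul_linear) (auto simp: span_T)
    then have "dim ((*v) A ` T) = dim T" by (rule dim_image_eq[OF matrix_vector_mul_linear])
    also have "dim T = card d"
      using dim_substandard_cart[where 'a=real and 'n='n, of d] dim_vec_eq[of T] unfolding T_def by argo
    finally have "card d = dim ((*v) A ` T)" by simp
    also have "\<dots> \<le> rank A" unfolding rank_dim_range by (rule dim_subset) auto
    finally show False using assms by simp
  qed
  then show ?thesis using that unfolding T_def by blast
qed

lemma diagm_mult_vector_nth:
  fixes e0 :: "'a::finite \<Rightarrow> nat"
  assumes "inj e0"
  shows "(diagm e0 e0 h n *v x) $ a = (if e0 a < n then h (e0 a) * x $ a else 0)"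
proof -
  have "(if e0 a = e0 a' \<and> e0 a' < n then h (e0 a') else 0) * x $ a' =
       (if a' = a then (if e0 a < n then h (e0 a) * x $ a else 0) else 0)" for a'
    using assms by (auto simp: inj_eq)
  then show ?thesis unfolding diagm_def matrix_vector_mult_def by simp
qed

lemma norm_diagm_mult_vector_ge:
  fixes e0 :: "'a::finite \<Rightarrow> nat" and e1 :: "'b::finite \<Rightarrow> nat"
  assumes e0: "inj e0" and e1: "bij_betw e1 UNIV {..<CARD('b)}" and n: "n \<le> CARD('b)"
    and t: "0 \<le> t" and supp: "\<And>a. x $ a \<noteq> 0 \<Longrightarrow> e0 a < n \<and> t \<le> \<bar>h (e0 a)\<bar>"
  shows "t * norm x \<le> norm (diagm e1 e0 h n *v x)"
proof (rule power2_le_imp_le)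
  have "transpose (diagm e1 e0 h n) ** diagm e1 e0 h n = diagm e0 e0 (\<lambda>k. h k * h k) n"
    by (simp add: transpose_diagm diagm_mult[OF e1 n])
  then have "(norm (diagm e1 e0 h n *v x))\<^sup>2
      = (\<Sum>a\<in>UNIV. x $ a * (if e0 a < n then h (e0 a) * h (e0 a) * x $ a else 0))"
    unfolding norm_matrix_vector_mult_sq by (simp add: inner_vec_def diagm_mult_vector_nth[OF e0])
  moreover have "(t * norm x)\<^sup>2 = (\<Sum>a\<in>UNIV. t\<^sup>2 * (x $ a)\<^sup>2)"
    by (simp add: power_mult_distrib norm_vec_power2 sum_distrib_left)
  moreover have "t\<^sup>2 * (x $ a)\<^sup>2 \<le> x $ a * (if e0 a < n then h (e0 a) * h (e0 a) * x $ a else 0)" for a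
  proof (cases "x $ a = 0")
    case False
    then have a: "e0 a < n" "t\<^sup>2 \<le> (h (e0 a))\<^sup>2" using supp t abs_le_square_iff by fastforce+
    then have "t\<^sup>2 * (x $ a)\<^sup>2 \<le> (h (e0 a))\<^sup>2 * (x $ a)\<^sup>2" by (intro mult_right_mono) auto
    then show ?thesis using a by (simp add: power2_eq_square mult_ac)
  qed simp
  ultimately show "(t * norm x)\<^sup>2 \<le> (norm (diagm e1 e0 h n *v x))\<^sup>2" by (simp add: sum_mono)
qed simp

lemma norm_diagm_diff_ge_if_rank_less:
  fixes e0 :: "'a::finite \<Rightarrow> nat" and e1 :: "'b::finite \<Rightarrow> nat" and B :: "real^'a^'b"
  assumes e0: "bij_betw e0 UNIV {..<CARD('a)}" and e1: "bij_betw e1 UNIV {..<CARD('b)}"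
    and na: "n \<le> CARD('a)" and nb: "n \<le> CARD('b)"
    and J: "J \<subseteq> {..<n}" and rank: "rank B < card J"
    and t: "0 \<le> t" and large: "\<And>j. j \<in> J \<Longrightarrow> t \<le> \<bar>h j\<bar>"
  shows "t \<le> norm (diagm e1 e0 h n - B)"
proof -
  have "bij_betw e0 (e0 -` J) J"
    using J na e0 by (intro bij_betw_subset[OF e0]) (auto simp: bij_betw_def)
  then have "card (e0 -` J) = card J" by (rule bij_betw_same_card)
  then obtain x where x: "x \<noteq> 0" "\<And>a. a \<notin> e0 -` J \<Longrightarrow> x$a = 0" "B *v x = 0"
    using exists_kernel_vector_supported[of B "e0 -` J"] rank by auto
  have "t * norm x \<le> norm (diagm e1 e0 h n *v x)"
    using e0 J x(2) large by (intro norm_diagm_mult_vector_ge[OF _ e1 nb t]) (auto simp: bij_betw_def)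
  also have "\<dots> = norm ((diagm e1 e0 h n - B) *v x)"
    using x(3) by (simp add: matrix_vector_mult_diff_rdistrib)
  also have "\<dots> \<le> norm (diagm e1 e0 h n - B) * norm x" by (rule norm_matrix_vector_mult_le)
  finally show ?thesis using x(1) by simp
qed

lemma rank_Sig1_le:
  fixes e0 :: "'a::finite \<Rightarrow> nat" and e1 :: "'b::finite \<Rightarrow> nat"
  assumes "inj e0"
  shows "rank (Sig1 e0 e1 \<sigma>) \<le> card {j. j < length \<sigma> \<and> \<sigma>!j \<noteq> 0}"
proof -
  let ?S = "Sig1 e0 e1 \<sigma>"
  define Z where "Z = {a. e0 a < length \<sigma> \<and> \<sigma>!(e0 a) \<noteq> 0}"
  have "column a ?S = 0" if "a \<notin> Z" for a
    using that unfolding column_def Sig1_def Z_def by (auto simp: vec_eq_iff)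
  then have "column a ?S \<in> span ((\<lambda>a. column a ?S) ` Z)" for a
    by (metis imageI span_base span_zero)
  then have "columns ?S \<subseteq> span ((\<lambda>a. column a ?S) ` Z)"
    unfolding columns_def by auto
  then have "dim (columns ?S) \<le> card ((\<lambda>a. column a ?S) ` Z)"
    by (intro dim_le_card) auto
  also have "\<dots> \<le> card Z" by (rule card_image_le) simp
  also have "\<dots> \<le> card {j. j < length \<sigma> \<and> \<sigma>!j \<noteq> 0}"
    by (rule card_inj_on_le[of e0]) (use assms in \<open>auto simp: Z_def inj_on_def inj_def\<close>)
  finally show ?thesis by (simp add: column_rank_def)
qed

lemma card_nonzero_nth_eq_if_mset_eq:
  assumes "mset xs = mset (ys::real list)"
  shows "card {j. j < length xs \<and> xs!j \<noteq> 0} = card {j. j < length ys \<and> ys!j \<noteq> 0}"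
proof -
  have "length (filter (\<lambda>v. v \<noteq> 0) xs) = length (filter (\<lambda>v. v \<noteq> 0) ys)"
    using assms by (metis mset_filter size_mset)
  then show ?thesis by (simp add: length_filter_conv_card)
qed

lemma rank_fst_le_if_mem_hatW:
  fixes e0 :: "'a::finite \<Rightarrow> nat"
  assumes "inj e0" and "W \<in> hatW e0 e1 e2 lam y s"
  shows "rank (fst W) \<le> card {j. j < length s \<and> s!j \<noteq> 0}"
proof -
  define \<sigma> where "\<sigma> = rev (sort s)"
  from assms(2) obtain Q n p U where W1: "fst W = Q ** Sig1 e0 e1 \<sigma> ** PiBlk e0 n p ** U"
    unfolding hatW_def Wset_def Let_def \<sigma>_def by auto
  have "rank (fst W) \<le> rank (Sig1 e0 e1 \<sigma>)"
    unfolding W1 by (meson order_trans rank_mul_le_left rank_mul_le_right)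
  also have "\<dots> \<le> card {j. j < length \<sigma> \<and> \<sigma>!j \<noteq> 0}" by (rule rank_Sig1_le[OF assms(1)])
  also have "\<dots> = card {j. j < length s \<and> s!j \<noteq> 0}"
    by (rule card_nonzero_nth_eq_if_mset_eq) (simp add: \<sigma>_def)
  finally show ?thesis .
qed

lemma le_infdist: "A \<noteq> {} \<Longrightarrow> (\<And>a. a \<in> A \<Longrightarrow> d \<le> dist x a) \<Longrightarrow> d \<le> infdist x A"
  by (simp add: infdist_notempty cINF_greatest)

lemma infdist_hatW_ge:
  fixes e0 :: "'a::finite \<Rightarrow> nat" and e1 :: "'b::finite \<Rightarrow> nat" and e2 :: "'c::finite \<Rightarrow> nat"
  assumes e0: "bij_betw e0 UNIV {..<CARD('a)}"
    and e1: "bij_betw e1 UNIV {..<CARD('b)}"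
    and e2: "bij_betw e2 UNIV {..<CARD('c)}"
    and n: "n = min CARD('a) CARD('c)" and nb: "n \<le> CARD('b)"
    and s: "s \<in> Aset n lam y" and k0: "k0 < n" "s!k0 = 0"
    and t: "0 \<le> t" and large: "\<And>j. j < n \<Longrightarrow> s!j \<noteq> 0 \<or> j = k0 \<Longrightarrow> t \<le> \<bar>h j\<bar>"
  shows "t \<le> infdist (diag_pair e0 e1 e2 h n) (hatW e0 e1 e2 lam y s)"
proof (rule le_infdist)
  show "hatW e0 e1 e2 lam y s \<noteq> {}" using diag_pair_in_hatW[OF e0 e1 e2 n nb s] by blast
next
  fix W assume W: "W \<in> hatW e0 e1 e2 lam y s"
  define J where "J = insert k0 {j. j < n \<and> s!j \<noteq> 0}"
  have J: "J \<subseteq> {..<n}" and "card J = Suc (card {j. j < n \<and> s!j \<noteq> 0})"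
    using k0 by (auto simp: J_def)
  moreover have "length s = n" using s by (simp add: Aset_def)
  ultimately have "rank (fst W) < card J"
    using rank_fst_le_if_mem_hatW[OF _ W] e0 by (simp add: bij_betw_def)
  moreover have "n \<le> CARD('a)" using n by simp
  moreover have "j \<in> J \<Longrightarrow> t \<le> \<bar>h j\<bar>" for j using large k0 by (auto simp: J_def)
  ultimately have "t \<le> norm (diagm e1 e0 h n - fst W)"
    using norm_diagm_diff_ge_if_rank_less[OF e0 e1 _ nb J _ t] by blast
  also have "\<dots> \<le> dist (diag_pair e0 e1 e2 h n) W"
    using dist_fst_le[of "diag_pair e0 e1 e2 h n" W] by (simp add: diag_pair_def dist_norm)
  finally show "t \<le> dist (diag_pair e0 e1 e2 h n) W" .
qed

lemma no_error_bound_if_cubic_residual: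
  fixes S :: "'v::real_normed_vector set" and g :: "'v \<Rightarrow> 'v" and P :: "real \<Rightarrow> 'v"
  assumes t0: "0 < t0"
    and path: "\<And>t. 0 < t \<Longrightarrow> t \<le> t0 \<Longrightarrow>
      t \<le> infdist (P t) S \<and> infdist (P t) S \<le> C * t \<and> norm (g (P t)) \<le> K * t^3"
  shows "\<not> (\<exists>\<epsilon>>0. \<exists>\<kappa>>0. \<forall>W. infdist W S \<le> \<epsilon> \<longrightarrow> infdist W S \<le> \<kappa> * norm (g W))"
proof
  assume "\<exists>\<epsilon>>0. \<exists>\<kappa>>0. \<forall>W. infdist W S \<le> \<epsilon> \<longrightarrow> infdist W S \<le> \<kappa> * norm (g W)"
  then obtain \<epsilon> \<kappa> where \<epsilon>: "0 < \<epsilon>" and \<kappa>: "0 < \<kappa>"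
    and bound: "\<And>W. infdist W S \<le> \<epsilon> \<Longrightarrow> infdist W S \<le> \<kappa> * norm (g W)"
    by blast
  define t where "t = min t0 (min 1 (min (\<epsilon> / (\<bar>C\<bar> + 1)) (1 / (\<kappa> * (\<bar>K\<bar> + 1)))))"
  have pos: "0 < \<bar>C\<bar> + 1" "0 < \<kappa> * (\<bar>K\<bar> + 1)" using \<kappa> by auto
  have "t \<le> t0" "t \<le> 1" "t \<le> \<epsilon> / (\<bar>C\<bar> + 1)" "t \<le> 1 / (\<kappa> * (\<bar>K\<bar> + 1))"
    unfolding t_def by (meson min.cobounded1 min.cobounded2 order_trans)+
  moreover have "0 < t" using t0 \<epsilon> pos by (simp add: t_def)
  ultimately have t: "0 < t" "t \<le> t0" "t \<le> 1" "t * (\<bar>C\<bar> + 1) \<le> \<epsilon>" "\<kappa> * (\<bar>K\<bar> + 1) * t \<le> 1"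
    using pos by (simp_all add: le_divide_eq mult.commute)
  with path have lower: "t \<le> infdist (P t) S" and upper: "infdist (P t) S \<le> C * t"
    and residual: "norm (g (P t)) \<le> K * t^3"
    by auto
  have "C * t \<le> \<bar>C\<bar> * t" using t(1) by (intro mult_right_mono) auto
  also have "\<dots> \<le> t * (\<bar>C\<bar> + 1)" using t(1) by (simp add: algebra_simps)
  finally have "infdist (P t) S \<le> \<epsilon>" using upper t(4) by linarith
  then have "t \<le> \<kappa> * (K * t^3)"
    using lower bound residual \<kappa> by (meson less_imp_le mult_left_mono order_trans)
  also have "\<dots> \<le> (\<kappa> * \<bar>K\<bar> * t) * t\<^sup>2"
    using \<kappa> t(1) mult_right_mono[OF abs_ge_self[of K], of "\<kappa> * t^3"]
    by (simp add: power3_eq_cube power2_eq_square mult_ac)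
  also have "\<dots> < 1 * t\<^sup>2"
    using t(1,5) mult_pos_pos[OF \<kappa> t(1)] by (intro mult_strict_right_mono) (simp_all add: algebra_simps)
  also have "\<dots> \<le> t" using t(1,3) by (simp add: power2_eq_square mult_left_le_one_le)
  finally show False by simp
qed

lemma exists_pos_le_abs_nonzero_nth:
  obtains t0 :: real where "0 < t0" "\<And>j. j < length s \<Longrightarrow> s!j \<noteq> 0 \<Longrightarrow> t0 \<le> \<bar>s!j\<bar>"
proof
  let ?M = "insert 1 {\<bar>s!j\<bar> | j. j < length s \<and> s!j \<noteq> 0}"
  have "finite ?M" by simp
  then show "0 < Min ?M" by (subst Min_gr_iff) auto
  show "Min ?M \<le> \<bar>s!j\<bar>" if "j < length s" "s!j \<noteq> 0" for j
    using that \<open>finite ?M\<close> by (intro Min_le) auto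
qed

lemma less_rankYD:
  assumes "\<forall>i j. i \<le> j \<and> j < n \<longrightarrow> y j \<le> y i" and "i < rankY n y"
  shows "i < n" "0 < y i"
proof -
  have "rankY n y \<le> n" unfolding rankY_def by (rule order_trans[OF card_mono[of "{..<n}"]]) auto
  then show "i < n" using assms(2) by simp
  show "0 < y i"
  proof (rule ccontr)
    assume "\<not> 0 < y i"
    then have "j < n \<Longrightarrow> i \<le> j \<Longrightarrow> \<not> 0 < y j" for j using assms(1) by force
    then have "{j. j < n \<and> 0 < y j} \<subseteq> {..<i}" by (auto simp: not_le[symmetric])
    then have "rankY n y \<le> i" unfolding rankY_def by (metis card_lessThan card_mono finite_lessThan)
    then show False using assms(2) by simp
  qed
qed

text \<open>At an index with \<open>\<lambda> = y\<^sub>i\<^sup>2\<close> the cubic \<open>a\<^sup>3 - \<surd>\<lambda> y\<^sub>i a + \<lambda> a\<close> degenerates to \<open>a\<^sup>3\<close>.\<close>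
lemma Aset_nth_eq_0:
  assumes "s \<in> Aset n lam y" "i < n" "0 < y i" "lam = (y i)^2"
  shows "s!i = 0"
proof -
  have "(s!i)^3 - sqrt lam * y i * (s!i) + lam * (s!i) = 0" using assms(1,2) by (simp add: Aset_def)
  then have "(s!i)^3 = 0" using assms(3,4) by (simp add: power2_eq_square)
  then show ?thesis by simp
qed

lemma grad_lossG_degenerate_path:
  fixes e0 :: "'a::finite \<Rightarrow> nat" and e1 :: "'b::finite \<Rightarrow> nat" and e2 :: "'c::finite \<Rightarrow> nat"
  assumes e0: "bij_betw e0 UNIV {..<CARD('a)}"
    and e1: "bij_betw e1 UNIV {..<CARD('b)}"
    and e2: "bij_betw e2 UNIV {..<CARD('c)}"
    and n: "n = min CARD('a) CARD('c)" and nb: "n \<le> CARD('b)"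
    and s: "s \<in> Aset n lam y" and i: "0 < y i" "lam = (y i)^2"
  shows "grad (lossG lam (Ymat e0 e2 y)) (diag_pair e0 e1 e2 ((nth s)(i := t)) n)
    = t^3 *\<^sub>R diag_pair e0 e1 e2 ((\<lambda>_. 0)(i := 2)) n"
  unfolding grad_lossG_diag_pair[OF e0 e1 e2 n nb] scaleR_diag_pair
proof (rule diag_pair_cong)
  fix k assume "k < n"
  then have "(s!k)^3 - sqrt lam * y k * (s!k) + lam * (s!k) = 0" using s by (simp add: Aset_def)
  then show "2 * ((((nth s)(i := t)) k)^3 - sqrt lam * y k * ((nth s)(i := t)) k + lam * ((nth s)(i := t)) k)
      = t^3 * ((\<lambda>_. 0)(i := 2)) k"
    using i by (cases "k = i") (simp_all add: power2_eq_square)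
qed

lemma diag_pair_degenerate_path:
  assumes "s!i = 0"
  shows "diag_pair e0 e1 e2 ((nth s)(i := t)) n
    = diag_pair e0 e1 e2 (nth s) n + t *\<^sub>R diag_pair e0 e1 e2 ((\<lambda>_. 0)(i := 1)) n"
  unfolding scaleR_diag_pair diag_pair_add using assms by (intro diag_pair_cong) auto

theorem lemmaA1:
  fixes e0 :: "'a::finite \<Rightarrow> nat" and e1 :: "'b::finite \<Rightarrow> nat" and e2 :: "'c::finite \<Rightarrow> nat"
    and y :: "nat \<Rightarrow> real" and lam :: real and s :: "real list"
  assumes "bij_betw e0 UNIV {..<CARD('a)}"
    and "bij_betw e1 UNIV {..<CARD('b)}"
    and "bij_betw e2 UNIV {..<CARD('c)}"
    and "lam > 0"
    and "\<forall>i j. i \<le> j \<and> j < min CARD('a) CARD('c) \<longrightarrow> y j \<le> y i"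
    and "\<forall>i < min CARD('a) CARD('c). 0 \<le> y i"
    and "CARD('b) \<ge> min CARD('a) CARD('c)"
    and "\<exists>i < rankY (min CARD('a) CARD('c)) y. lam = (y i)^2"
    and "s \<in> Aset (min CARD('a) CARD('c)) lam y"
  shows "\<not> (\<exists>\<epsilon>>0. \<exists>\<kappa>>0. \<forall>W :: (real^'a^'b) \<times> (real^'b^'c).
            infdist W (hatW e0 e1 e2 lam y s) \<le> \<epsilon> \<longrightarrow>
            infdist W (hatW e0 e1 e2 lam y s) \<le> \<kappa> * norm (grad (lossG lam (Ymat e0 e2 y)) W))"
proof -
  note e = assms(1-3)
  define n where "n = min CARD('a) CARD('c)"
  have nb: "n \<le> CARD('b)" and s: "s \<in> Aset n lam y" and len: "length s = n"
    using assms(7,9) by (simp_all add: n_def Aset_def)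
  obtain i where i: "i < rankY n y" "lam = (y i)^2" using assms(8) n_def by auto
  have "i < n" "0 < y i" using less_rankYD[OF assms(5)[folded n_def] i(1)] by simp_all
  with i s have s_i: "s!i = 0" by (intro Aset_nth_eq_0)
  obtain t0 where t0: "0 < t0" "\<And>j. j < n \<Longrightarrow> s!j \<noteq> 0 \<Longrightarrow> t0 \<le> \<bar>s!j\<bar>"
    using exists_pos_le_abs_nonzero_nth len by metis
  let ?S = "hatW e0 e1 e2 lam y s"
  let ?P = "\<lambda>t. diag_pair e0 e1 e2 ((nth s)(i := t)) n"
  let ?D = "diag_pair e0 e1 e2 ((\<lambda>_. 0)(i := 1)) n :: (real^'a^'b) \<times> (real^'b^'c)"
  let ?E = "diag_pair e0 e1 e2 ((\<lambda>_. 0)(i := 2)) n :: (real^'a^'b) \<times> (real^'b^'c)"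
  show ?thesis
  proof (rule no_error_bound_if_cubic_residual[where P = ?P and C = "norm ?D" and K = "norm ?E", OF t0(1)])
    fix t :: real assume t: "0 < t" "t \<le> t0"
    have "t \<le> infdist (?P t) ?S"
      using t t0(2) \<open>i < n\<close> s_i by (intro infdist_hatW_ge[OF e n_def nb s]) fastforce+
    moreover have "infdist (?P t) ?S \<le> norm ?D * t"
      using infdist_le[OF diag_pair_in_hatW[OF e n_def nb s], of "?P t"] t(1)
      by (simp add: diag_pair_degenerate_path[OF s_i] dist_norm mult.commute)
    moreover have "norm (grad (lossG lam (Ymat e0 e2 y)) (?P t)) \<le> norm ?E * t^3"
      using t(1) by (simp add: grad_lossG_degenerate_path[OF e n_def nb s \<open>0 < y i\<close> i(2)] mult.commute)
    ultimately show "t \<le> infdist (?P t) ?S \<and> infdist (?P t) ?S \<le> norm ?D * t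
        \<and> norm (grad (lossG lam (Ymat e0 e2 y)) (?P t)) \<le> norm ?E * t^3"
      by blast
  qed
qed

end
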